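(* Let $\kappa\ge1$. For any polynomials $\varphi_1,\varphi_2\in\mathbb{C}[t]$, $T[\varphi_1\varphi_2]=T[\varphi_1]T[\varphi_2]$. Consequently $\widehat{\varphi_1\varphi_2}=\widehat{\varphi_1}\circledast_\kappa\widehat{\varphi_2}$.
   Context: $\mathrm{T}_\kappa=(V_\kappa,E_\kappa)$ is the Cayley tree of order $\kappa$ (infinite connected acyclic graph, every vertex of degree $\kappa+1$), $d$ its graph distance; operators on $\ell^2(V_\kappa)$ are identified with kernels $A(x,y)=\langle A\delta_y,\delta_x\rangle$. Cartier–Dunau polynomials: $P_0=1$, $P_1(t)=t$, $tP_n=\frac{\kappa}{\kappa+1}P_{n+1}+\frac1{\kappa+1}P_{n-1}$ ($n\ge1$). $d\Pi_\kappa(t)=\frac{\kappa+1}{2\pi}\frac{\sqrt{4\kappa(\kappa+1)^{-2}-t^2}}{1-t^2}\mathbf{1}_{[-2\sqrt\kappa/(\kappa+1),\,2\sqrt\kappa/(\kappa+1)]}(t)dt$. For $\varphi\in L^1(\Pi_\kappa)$, $\widehat\varphi(n)=\int P_n\varphi\,d\Pi_\kappa$ and $T[\varphi](x,y)=\widehat\varphi(d(x,y))$ (for polynomial $\varphi$ this is a bounded operator on $\ell^2(V_\kappa)$). For $\alpha_1,\alpha_2:\mathbb{N}_0\to\mathbb{C}$ whose kernels $\alpha_i(d(x,y))$ define bounded operators, fix $(v_n)_{n\ge0}$ in $V_\kappa$ with $d(v_k,v_n)=|k-n|$ and define $(\alpha_1\circledast_\kappa\alpha_2)(n)=\sum_{x\in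 V_\kappa}\alpha_1(d(v_0,x))\alpha_2(d(x,v_n))$. *)

theory Defs
  imports "HOL-Analysis.Analysis" "HOL-Computational_Algebra.Polynomial"
begin

text \<open>Concrete model of the Cayley tree of order kappa: vertices are reduced words
  over the alphabet {0..kappa} (no two consecutive letters equal); x and y are adjacent
  iff one is obtained from the other by appending one letter. Every vertex has degree kappa+1.\<close>

definition cayley_V :: "nat \<Rightarrow> nat list set" where
  "cayley_V \<kappa> = {xs. set xs \<subseteq> {..\<kappa>} \<and> successively (\<noteq>) xs}"

definition cayley_adj :: "nat \<Rightarrow> nat list \<Rightarrow> nat list \<Rightarrow> bool" where
  "cayley_adj \<kappa> x y \<longleftrightarrow> x \<in> cayley_V \<kappa> \<and> y \<in> cayley_V \<kappa> \<and>
     (\<exists>i. y = x @ [i] \<or> x = y @ [i])"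

definition cayley_dist :: "nat \<Rightarrow> nat list \<Rightarrow> nat list \<Rightarrow> nat" where
  "cayley_dist \<kappa> x y = (LEAST n. (cayley_adj \<kappa> ^^ n) x y)"

fun cartier_dunau :: "nat \<Rightarrow> nat \<Rightarrow> complex poly" where
  "cartier_dunau \<kappa> 0 = 1"
| "cartier_dunau \<kappa> (Suc 0) = [:0, 1:]"
| "cartier_dunau \<kappa> (Suc (Suc n)) =
     smult (1 / of_nat \<kappa>)
       (smult (of_nat \<kappa> + 1) (pCons 0 (cartier_dunau \<kappa> (Suc n))) - cartier_dunau \<kappa> n)"

definition Pi_density :: "nat \<Rightarrow> real \<Rightarrow> real" where
  "Pi_density \<kappa> t = (real \<kappa> + 1) / (2 * pi) *
      sqrt (4 * real \<kappa> / (real \<kappa> + 1)^2 - t^2) / (1 - t^2) *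
      indicator {- 2 * sqrt (real \<kappa>) / (real \<kappa> + 1) .. 2 * sqrt (real \<kappa>) / (real \<kappa> + 1)} t"

definition Pi_measure :: "nat \<Rightarrow> real measure" where
  "Pi_measure \<kappa> = density lborel (\<lambda>t. ennreal (Pi_density \<kappa> t))"

definition cd_hat :: "nat \<Rightarrow> complex poly \<Rightarrow> nat \<Rightarrow> complex" where
  "cd_hat \<kappa> \<phi> n = (LINT t | Pi_measure \<kappa>.
       poly (cartier_dunau \<kappa> n) (complex_of_real t) * poly \<phi> (complex_of_real t))"

definition T_kernel :: "nat \<Rightarrow> complex poly \<Rightarrow> nat list \<Rightarrow> nat list \<Rightarrow> complex" where
  "T_kernel \<kappa> \<phi> x y = cd_hat \<kappa> \<phi> (cayley_dist \<kappa> x y)"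

text \<open>Convolution, relative to a geodesic ray v.\<close>
definition tree_conv :: "nat \<Rightarrow> (nat \<Rightarrow> nat list) \<Rightarrow> (nat \<Rightarrow> complex) \<Rightarrow> (nat \<Rightarrow> complex) \<Rightarrow> nat \<Rightarrow> complex" where
  "tree_conv \<kappa> v \<alpha>1 \<alpha>2 n =
     (\<Sum>\<^sub>\<infinity>x\<in>cayley_V \<kappa>. \<alpha>1 (cayley_dist \<kappa> (v 0) x) * \<alpha>2 (cayley_dist \<kappa> x (v n)))"

end

(*
  Vertices are reduced words, and the distance of x and y is |x| + |y| - 2 |lcp x y|.
  A vertex x different from y therefore has exactly one neighbour closer to y and
  kappa neighbours farther away.

  The substitution t = -2 sqrt(kappa)/(kappa+1) cos theta turns P_n d Pi into an
  elementary trigonometric integrand on [0, pi]; a two-step recursion in n and the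
  symmetry theta -> pi - theta show that P_n has Pi-integral 1 for n = 0 and 0
  otherwise, i.e. T[1] = I.  By the three-term recursion for P_n, multiplying phi
  by t replaces hat phi(n) by kappa/(kappa+1) hat phi(n+1) + 1/(kappa+1) hat phi(n-1);
  with the neighbour count this reads
    T[t phi](x, y) = 1/(kappa+1) * (sum of T[phi](w, y) over the neighbours w of x),
  so T[t phi] = T[t] T[phi].  Multiplicativity follows by induction on phi1 in
  Horner form (all sums over neighbours are finite), and the convolution identity
  is its (v 0, v n) entry.
*)

theory Submission
  imports Defs "HOL-Library.Sublist"
begin

section \<open>Distance and neighbours in the Cayley tree\<close>

abbreviation lcp :: "'a list \<Rightarrow> 'a list \<Rightarrow> 'a list" where
  "lcp \<equiv> longest_common_prefix"

lemma lcp_eqI: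
  assumes "prefix p x" "prefix p y" "\<And>q. prefix q x \<Longrightarrow> prefix q y \<Longrightarrow> prefix q p"
  shows "lcp x y = p"
  using assms by (meson longest_common_prefix_max_prefix longest_common_prefix_prefix1
      longest_common_prefix_prefix2 prefix_order.antisym)

lemma lcp_prefix: "prefix x y \<Longrightarrow> lcp x y = x"
  by (rule lcp_eqI) auto

lemma lcp_snoc: "lcp (x @ [i]) y = (if prefix (x @ [i]) y then x @ [i] else lcp x y)"
proof (cases "prefix (x @ [i]) y")
  case False
  have "lcp (x @ [i]) y = lcp x y"
  proof (rule lcp_eqI)
    show "prefix (lcp x y) (x @ [i])"
      using longest_common_prefix_prefix1 prefix_order.trans by fastforce
    show "prefix q (lcp x y)" if "prefix q (x @ [i])" "prefix q y" for q
      using that False by (metis longest_common_prefix_max_prefix prefix_snoc)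
  qed (rule longest_common_prefix_prefix2)
  with False show ?thesis by simp
qed (simp add: lcp_prefix)

lemma length_lcp_le: "length (lcp x y) \<le> length x" "length (lcp x y) \<le> length y"
  by (simp_all add: longest_common_prefix_prefix1 longest_common_prefix_prefix2 prefix_length_le)

definition word_dist :: "'a list \<Rightarrow> 'a list \<Rightarrow> nat" where
  "word_dist x y = length x + length y - 2 * length (lcp x y)"

lemma word_dist_self [simp]: "word_dist x x = 0"
  by (simp add: word_dist_def lcp_prefix)

lemma word_dist_eq_0_iff: "word_dist x y = 0 \<longleftrightarrow> x = y"
proof
  assume "word_dist x y = 0"
  then have "length x \<le> length (lcp x y)" "length y \<le> length (lcp x y)"
    using length_lcp_le[of x y] unfolding word_dist_def by linarith+
  then have "lcp x y = x" "lcp x y = y"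
    using longest_common_prefix_prefix1[of x y] longest_common_prefix_prefix2[of x y]
    by (metis append_eq_conv_conj prefix_def take_all)+
  then show "x = y" by simp
qed simp

lemma word_dist_snoc:
  "word_dist (x @ [i]) y = (if prefix (x @ [i]) y then word_dist x y - 1 else word_dist x y + 1)"
proof (cases "prefix (x @ [i]) y")
  case True
  then have "prefix x y" by (auto simp: prefix_def)
  with True show ?thesis unfolding word_dist_def by (simp add: lcp_prefix)
next
  case False
  then show ?thesis using length_lcp_le[of x y] unfolding word_dist_def by (simp add: lcp_snoc)
qed

lemma word_dist_butlast:
  assumes "x \<noteq> []"
  shows "word_dist (butlast x) y = (if prefix x y then word_dist x y + 1 else word_dist x y - 1)"
proof -
  have x: "x = butlast x @ [last x]" using assms by simp
  have "word_dist (butlast x) y \<noteq> 0" if "prefix x y"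
  proof
    assume "word_dist (butlast x) y = 0"
    then have "length x \<le> length (butlast x)"
      using prefix_length_le[OF that] by (simp add: word_dist_eq_0_iff)
    moreover have "length x > 0" using assms by simp
    ultimately show False using length_butlast[of x] by linarith
  qed
  then show ?thesis using word_dist_snoc[of "butlast x" "last x" y] by (simp flip: x)
qed

lemma cayley_V_take:
  assumes "x \<in> cayley_V k"
  shows "take m x \<in> cayley_V k"
proof -
  have "successively (\<noteq>) (take m x @ drop m x)"
    using assms unfolding cayley_V_def by simp
  then have "successively (\<noteq>) (take m x)"
    by (simp only: successively_append_iff)
  then show ?thesis
    using assms set_take_subset[of m x] unfolding cayley_V_def by auto
qed

lemma cayley_V_butlast: "x \<in> cayley_V k \<Longrightarrow> butlast x \<in> cayley_V k"
  by (simp add: butlast_conv_take cayley_V_take)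

lemma cayley_V_snoc_iff:
  "x @ [i] \<in> cayley_V k \<longleftrightarrow> x \<in> cayley_V k \<and> i \<le> k \<and> (x = [] \<or> last x \<noteq> i)"
  unfolding cayley_V_def by (auto simp: successively_append_iff)

definition cayley_nbrs :: "nat \<Rightarrow> nat list \<Rightarrow> nat list set" where
  "cayley_nbrs k x = {w. cayley_adj k x w}"

lemma cayley_nbrs_eq:
  assumes "x \<in> cayley_V k"
  shows "cayley_nbrs k x =
    (\<lambda>i. x @ [i]) ` {i. x @ [i] \<in> cayley_V k} \<union> (if x = [] then {} else {butlast x})"
proof -
  have "x = w @ [i] \<longleftrightarrow> x \<noteq> [] \<and> w = butlast x \<and> i = last x" for w i
    by auto
  then show ?thesis
    using assms cayley_V_butlast[OF assms] unfolding cayley_nbrs_def cayley_adj_def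
    by auto
qed

lemma card_cayley_nbrs:
  assumes x: "x \<in> cayley_V k"
  shows "finite (cayley_nbrs k x)" "card (cayley_nbrs k x) = k + 1"
proof -
  define C where "C = {i. x @ [i] \<in> cayley_V k}"
  define P where "P = (if x = [] then {} else {butlast x})"
  have C: "C = {..k} - (if x = [] then {} else {last x})"
    using x unfolding C_def cayley_V_snoc_iff by auto
  have "x \<noteq> [] \<Longrightarrow> last x \<le> k"
    using x last_in_set unfolding cayley_V_def by fastforce
  then have card_C: "card C = (if x = [] then k + 1 else k)"
    unfolding C by auto
  have nbrs: "cayley_nbrs k x = (\<lambda>i. x @ [i]) ` C \<union> P"
    unfolding cayley_nbrs_eq[OF x] C_def P_def ..
  have "finite C" unfolding C by simp
  then show "finite (cayley_nbrs k x)"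
    unfolding nbrs P_def by simp
  have "card (cayley_nbrs k x) = card ((\<lambda>i. x @ [i]) ` C) + card P"
    unfolding nbrs using \<open>finite C\<close>
    by (intro card_Un_disjoint) (auto simp: P_def dest: arg_cong[of _ _ length])
  also have "\<dots> = k + 1"
    using card_C by (simp add: card_image inj_on_def P_def)
  finally show "card (cayley_nbrs k x) = k + 1" .
qed

definition step_toward :: "'a list \<Rightarrow> 'a list \<Rightarrow> 'a list" where
  "step_toward x y = (if prefix x y then take (Suc (length x)) y else butlast x)"

lemma step_toward_in_cayley_nbrs:
  assumes x: "x \<in> cayley_V k" and y: "y \<in> cayley_V k" and "x \<noteq> y"
  shows "step_toward x y \<in> cayley_nbrs k x"
proof (cases "prefix x y")
  case True
  then obtain j r where "y = x @ j # r"
    using \<open>x \<noteq> y\<close> by (cases "drop (length x) y") (auto simp: prefix_def)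
  then have "step_toward x y = x @ [j]"
    using True unfolding step_toward_def by simp
  moreover have "x @ [j] \<in> cayley_V k"
    using cayley_V_take[OF y, of "Suc (length x)"] \<open>y = x @ j # r\<close> by simp
  ultimately show ?thesis
    using x unfolding cayley_nbrs_def cayley_adj_def by auto
next
  case False
  then have "x \<noteq> []" by auto
  then have "x = step_toward x y @ [last x]"
    using False unfolding step_toward_def by simp
  then show ?thesis
    using x cayley_V_butlast[OF x] False
    unfolding cayley_nbrs_def cayley_adj_def step_toward_def by auto
qed

lemma word_dist_cayley_adj:
  assumes "cayley_adj k x w"
  shows "word_dist w y =
    (if x \<noteq> y \<and> w = step_toward x y then word_dist x y - 1 else word_dist x y + 1)"
proof -
  obtain i where "w = x @ [i] \<or> x = w @ [i]"
    using assms unfolding cayley_adj_def by blast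
  then show ?thesis
  proof
    assume w: "w = x @ [i]"
    have "prefix (x @ [i]) y \<longleftrightarrow> x \<noteq> y \<and> x @ [i] = step_toward x y"
    proof
      assume "prefix (x @ [i]) y"
      then obtain r where "y = x @ i # r" by (auto simp: prefix_def)
      then show "x \<noteq> y \<and> x @ [i] = step_toward x y" by (simp add: step_toward_def)
    qed (auto simp: step_toward_def take_is_prefix split: if_splits dest: arg_cong[of _ _ length])
    then show ?thesis using w word_dist_snoc[of x i y] by simp
  next
    assume x: "x = w @ [i]"
    have "\<not> prefix x y \<longleftrightarrow> x \<noteq> y \<and> w = step_toward x y"
      unfolding step_toward_def using x
      by (auto simp: prefix_def dest: arg_cong[of _ _ length])
    then show ?thesis using x word_dist_butlast[of x y] by auto
  qed
qed

lemma word_dist_le_relpowp_cayley_adj: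
  "(cayley_adj k ^^ n) x y \<Longrightarrow> word_dist x y \<le> n"
proof (induction n arbitrary: x)
  case (Suc n)
  from Suc.prems obtain w where "cayley_adj k x w" "(cayley_adj k ^^ n) w y"
    by (rule relpowp_Suc_E2)
  then have "word_dist w y \<le> n" using Suc.IH by simp
  moreover have "word_dist x y \<le> word_dist w y + 1"
    using word_dist_cayley_adj[OF \<open>cayley_adj k x w\<close>, of y]
    by (cases "x \<noteq> y \<and> w = step_toward x y") simp_all
  ultimately show ?case by simp
qed (simp add: word_dist_eq_0_iff)

lemma relpowp_cayley_adj_word_dist:
  assumes "x \<in> cayley_V k" "y \<in> cayley_V k"
  shows "(cayley_adj k ^^ word_dist x y) x y"
  using assms
proof (induction "word_dist x y" arbitrary: x)
  case 0
  then show ?case by (simp add: word_dist_eq_0_iff)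
next
  case (Suc n)
  define w where "w = step_toward x y"
  have "x \<noteq> y" using Suc.hyps(2) by auto
  then have "cayley_adj k x w"
    using step_toward_in_cayley_nbrs[OF Suc.prems] unfolding w_def cayley_nbrs_def by simp
  moreover have "word_dist w y = n"
    using word_dist_cayley_adj[OF \<open>cayley_adj k x w\<close>, of y] \<open>x \<noteq> y\<close> Suc.hyps(2)
    unfolding w_def by simp
  moreover have "w \<in> cayley_V k"
    using \<open>cayley_adj k x w\<close> unfolding cayley_adj_def by simp
  ultimately have "(cayley_adj k ^^ n) w y"
    using Suc.hyps(1)[of w] Suc.prems(2) by simp
  with \<open>cayley_adj k x w\<close> show ?case
    unfolding Suc.hyps(2)[symmetric] by (rule relpowp_Suc_I2)
qed

lemma cayley_dist_eq_word_dist: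
  "x \<in> cayley_V k \<Longrightarrow> y \<in> cayley_V k \<Longrightarrow> cayley_dist k x y = word_dist x y"
  unfolding cayley_dist_def
  by (rule Least_equality) (auto intro: relpowp_cayley_adj_word_dist word_dist_le_relpowp_cayley_adj)

lemma sum_cayley_nbrs_word_dist:
  fixes h :: "nat \<Rightarrow> 'a::comm_semiring_1"
  assumes x: "x \<in> cayley_V k" and y: "y \<in> cayley_V k"
  shows "(\<Sum>w\<in>cayley_nbrs k x. h (word_dist w y)) =
    (if x = y then of_nat (k + 1) * h 1
     else h (word_dist x y - 1) + of_nat k * h (word_dist x y + 1))"
proof (cases "x = y")
  case True
  then have "\<And>w. w \<in> cayley_nbrs k x \<Longrightarrow> word_dist w y = 1"
    using word_dist_cayley_adj unfolding cayley_nbrs_def by (simp add: word_dist_eq_0_iff)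
  then show ?thesis using True card_cayley_nbrs[OF x] by simp
next
  case False
  define s where "s = step_toward x y"
  have s: "s \<in> cayley_nbrs k x" unfolding s_def by (rule step_toward_in_cayley_nbrs[OF x y False])
  have "(\<Sum>w\<in>cayley_nbrs k x. h (word_dist w y)) =
      h (word_dist s y) + (\<Sum>w\<in>cayley_nbrs k x - {s}. h (word_dist w y))"
    using card_cayley_nbrs(1)[OF x] s by (rule sum.remove)
  also have "\<dots> = h (word_dist x y - 1) + (\<Sum>w\<in>cayley_nbrs k x - {s}. h (word_dist x y + 1))"
    using s False word_dist_cayley_adj[of k x _ y] unfolding cayley_nbrs_def s_def by auto
  also have "\<dots> = h (word_dist x y - 1) + of_nat k * h (word_dist x y + 1)"
    using s card_cayley_nbrs[OF x] by simp
  finally show ?thesis using False by simp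
qed

section \<open>Integrals of the Cartier--Dunau polynomials\<close>

fun cd_real :: "nat \<Rightarrow> nat \<Rightarrow> real \<Rightarrow> real" where
  "cd_real k 0 t = 1"
| "cd_real k (Suc 0) t = t"
| "cd_real k (Suc (Suc n)) t = ((real k + 1) * t * cd_real k (Suc n) t - cd_real k n t) / real k"

lemma poly_cartier_dunau_of_real:
  "poly (cartier_dunau k n) (complex_of_real t) = complex_of_real (cd_real k n t)"
  by (induction k n t rule: cd_real.induct) (simp_all add: field_simps)

lemma continuous_on_cd_real: "continuous_on A (cd_real k n)"
proof -
  have "cd_real k n = (\<lambda>t. Re (poly (cartier_dunau k n) (complex_of_real t)))"
    by (simp add: poly_cartier_dunau_of_real)
  then show ?thesis by (auto intro!: continuous_intros)
qed

lemma cd_real_uminus: "cd_real k n (- t) = (-1) ^ n * cd_real k n t"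
  by (induction k n t rule: cd_real.induct) (simp_all add: field_simps)

lemma cd_real_three_term:
  assumes "k \<ge> 1"
  shows "t * cd_real k (Suc n) t =
    real k / (real k + 1) * cd_real k (Suc (Suc n)) t + 1 / (real k + 1) * cd_real k n t"
proof -
  have "real k * cd_real k (Suc (Suc n)) t = (real k + 1) * t * cd_real k (Suc n) t - cd_real k n t"
    using assms by simp
  then have "real k * cd_real k (Suc (Suc n)) t + cd_real k n t = (real k + 1) * (t * cd_real k (Suc n) t)"
    by simp
  moreover have "real k + 1 \<noteq> 0" using of_nat_0_le_iff[of k] by linarith
  ultimately have "t * cd_real k (Suc n) t =
      (real k * cd_real k (Suc (Suc n)) t + cd_real k n t) / (real k + 1)"
    by (simp add: nonzero_eq_divide_eq mult.commute)
  then show ?thesis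
    by (simp add: add_divide_distrib del: cd_real.simps)
qed

definition Pi_edge :: "nat \<Rightarrow> real" where
  "Pi_edge k = 2 * sqrt (real k) / (real k + 1)"

definition theta_num :: "nat \<Rightarrow> nat \<Rightarrow> real \<Rightarrow> real" where
  "theta_num k n x = real k * sin ((real n + 1) * x) - sin ((real n - 1) * x)"

definition theta_den :: "nat \<Rightarrow> real \<Rightarrow> real" where
  "theta_den k x = (real k)\<^sup>2 + 1 - 2 * real k * cos (2 * x)"

definition theta_integrand :: "nat \<Rightarrow> nat \<Rightarrow> real \<Rightarrow> real" where
  "theta_integrand k n x = sin x * theta_num k n x / theta_den k x"

lemma theta_num_Suc_Suc:
  "theta_num k (Suc (Suc n)) x = 2 * cos x * theta_num k (Suc n) x - theta_num k n x"
proof -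
  have "a * sin (y + x) + a * sin (y - x) = 2 * a * sin y * cos x" for a y
    by (simp add: sin_add sin_diff algebra_simps)
  from this[of k "(real n + 2) * x"] this[of 1 "real n * x"] show ?thesis
    unfolding theta_num_def by (simp add: algebra_simps)
qed

lemma cd_real_Pi_edge_cos:
  assumes "k \<ge> 1"
  shows "(real k + 1) * sqrt (real k) ^ n * sin x * cd_real k n (Pi_edge k * cos x) = theta_num k n x"
proof (induction n rule: induct_nat_012)
  case 0
  show ?case by (simp add: theta_num_def algebra_simps)
next
  case 1
  have "(real k + 1) * sqrt (real k) ^ 1 * sin x * cd_real k 1 (Pi_edge k * cos x)
      = ((real k + 1) * Pi_edge k * sqrt (real k)) * sin x * cos x"
    by (simp add: algebra_simps)
  also have "\<dots> = real k * sin (2 * x)"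
    by (simp add: Pi_edge_def sin_double)
  finally show ?case by (simp add: theta_num_def)
next
  case (ge2 n)
  define c where "c = Pi_edge k * cos x"
  have "real k * cd_real k (Suc (Suc n)) c = (real k + 1) * c * cd_real k (Suc n) c - cd_real k n c"
    using assms by simp
  also have "(real k + 1) * c = 2 * sqrt (real k) * cos x"
    by (simp add: c_def Pi_edge_def)
  finally have rec: "real k * cd_real k (Suc (Suc n)) c =
      2 * sqrt (real k) * cos x * cd_real k (Suc n) c - cd_real k n c" .
  have "sqrt (real k) ^ Suc (Suc n) = real k * sqrt (real k) ^ n" by simp
  then have "(real k + 1) * sqrt (real k) ^ Suc (Suc n) * sin x * cd_real k (Suc (Suc n)) c
      = (real k + 1) * sqrt (real k) ^ n * sin x * (real k * cd_real k (Suc (Suc n)) c)"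
    by (simp del: cd_real.simps)
  also have "\<dots> = 2 * cos x * ((real k + 1) * sqrt (real k) ^ Suc n * sin x * cd_real k (Suc n) c)
      - (real k + 1) * sqrt (real k) ^ n * sin x * cd_real k n c"
    unfolding rec by (simp add: algebra_simps del: cd_real.simps)
  finally show ?case
    using ge2.IH theta_num_Suc_Suc unfolding c_def by simp
qed

lemma theta_den_eq: "theta_den k x = (real k - 1)\<^sup>2 + 4 * real k * (sin x)\<^sup>2"
  unfolding theta_den_def cos_double_sin by (simp add: power2_eq_square algebra_simps)

lemma theta_den_nonneg: "theta_den k x \<ge> 0"
  unfolding theta_den_eq by simp

lemma theta_den_eq_0: "k \<ge> 1 \<Longrightarrow> theta_den k x = 0 \<Longrightarrow> k = 1 \<and> sin x = 0"
  unfolding theta_den_eq by (simp add: add_nonneg_eq_0_iff)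

lemma theta_num_diff_Suc_Suc:
  "real k * theta_num k n x - theta_num k (Suc (Suc n)) x = sin ((real n + 1) * x) * theta_den k x"
proof -
  have "a * sin (y + 2 * x) + a * sin (y - 2 * x) = 2 * a * sin y * cos (2 * x)" for a y
    by (simp add: sin_add sin_diff algebra_simps)
  from this[of k "(real n + 1) * x"] show ?thesis
    unfolding theta_num_def theta_den_def by (simp add: algebra_simps power2_eq_square)
qed

lemma theta_integrand_diff_Suc_Suc:
  assumes "k \<ge> 1"
  shows "real k * theta_integrand k n x - theta_integrand k (Suc (Suc n)) x = sin x * sin ((real n + 1) * x)"
proof (cases "theta_den k x = 0")
  case True
  then show ?thesis using theta_den_eq_0[OF assms] unfolding theta_integrand_def by simp
next
  case False
  have "real k * theta_integrand k n x - theta_integrand k (Suc (Suc n)) x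
      = sin x * (real k * theta_num k n x - theta_num k (Suc (Suc n)) x) / theta_den k x"
    unfolding theta_integrand_def by (simp add: algebra_simps diff_divide_distrib)
  with False show ?thesis unfolding theta_num_diff_Suc_Suc by simp
qed

lemma theta_integrand_reflect: "theta_integrand k n (pi - x) = (-1) ^ n * theta_integrand k n x"
proof -
  have "sin (real m * pi - y) = - ((-1) ^ m * sin y)" for m y
    by (simp add: sin_diff)
  from this[of "Suc n" "(real n + 1) * x"] this[of "Suc n" "(real n - 1) * x"]
  have "sin ((real n + 1) * (pi - x)) = (-1) ^ n * sin ((real n + 1) * x)"
       "sin ((real n - 1) * (pi - x)) = (-1) ^ n * sin ((real n - 1) * x)"
    by (simp_all add: algebra_simps sin_diff)
  moreover have "cos (2 * (pi - x)) = cos (2 * x)"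
    by (simp add: algebra_simps cos_diff)
  ultimately show ?thesis
    unfolding theta_integrand_def theta_num_def theta_den_def by (simp add: algebra_simps)
qed

lemma has_integral_reflect_interval:
  fixes f :: "real \<Rightarrow> 'a::real_normed_vector"
  assumes "(f has_integral i) {a..b}"
  shows "((\<lambda>x. f (a + b - x)) has_integral i) {a..b}"
proof -
  have "((\<lambda>x. f ((-1) *\<^sub>R x + (a + b))) has_integral (1 / \<bar>-1\<bar> ^ DIM(real)) *\<^sub>R i)
      ((\<lambda>x. (1 / (-1)) *\<^sub>R x + - ((1 / (-1)) *\<^sub>R (a + b))) ` cbox a b)"
    by (rule has_integral_affinity) (use assms in auto)
  moreover have "(\<lambda>x::real. (1 / (-1)) *\<^sub>R x + - ((1 / (-1)) *\<^sub>R (a + b))) = (\<lambda>x. (-1) * x + (a + b))"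
    by auto
  ultimately show ?thesis
    by (simp add: image_affinity_atLeastAtMost split: if_splits)
qed

lemma has_integral_cos_nat_mult:
  "((\<lambda>x. cos (real m * x)) has_integral (if m = 0 then pi else 0)) {0..pi}"
proof (cases "m = 0")
  case False
  have "((\<lambda>x. cos (real m * x)) has_integral (sin (real m * pi) / real m - sin (real m * 0) / real m)) {0..pi}"
  proof (rule fundamental_theorem_of_calculus)
    show "((\<lambda>x. sin (real m * x) / real m) has_vector_derivative cos (real m * x)) (at x within {0..pi})"
      for x
      using False by (auto intro!: derivative_eq_intros simp: has_real_derivative_iff_has_vector_derivative[symmetric])
  qed simp
  with False show ?thesis by (simp add: sin_npi2)
qed (use has_integral_const_real[of "1 :: real" 0 pi] in simp)

lemma has_integral_sin_mult_sin:
  "((\<lambda>x. sin x * sin ((real n + 1) * x)) has_integral (if n = 0 then pi / 2 else 0)) {0..pi}"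
proof -
  have "(\<lambda>x. sin x * sin ((real n + 1) * x)) = (\<lambda>x. (cos (real n * x) - cos (real (n + 2) * x)) / 2)"
  proof
    fix x
    have "cos (real n * x) = cos ((real n + 1) * x - x)" "cos (real (n + 2) * x) = cos ((real n + 1) * x + x)"
      by (simp_all add: algebra_simps)
    then show "sin x * sin ((real n + 1) * x) = (cos (real n * x) - cos (real (n + 2) * x)) / 2"
      by (simp add: cos_diff cos_add)
  qed
  moreover have "((\<lambda>x. (cos (real n * x) - cos (real (n + 2) * x)) / 2) has_integral
      ((if n = 0 then pi else 0) - (if n + 2 = 0 then pi else 0)) / 2) {0..pi}"
    by (intro has_integral_divide has_integral_diff has_integral_cos_nat_mult)
  ultimately show ?thesis by (cases "n = 0") simp_all
qed

lemma arctan_theta_has_real_derivative: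
  assumes "k > 1"
  shows "((\<lambda>x. arctan (sin (2 * x) / (real k - cos (2 * x)))) has_real_derivative
      2 * (real k * cos (2 * x) - 1) / theta_den k x) (at x within S)"
proof -
  have quotient_rule_simp:
    "inverse (1 + (s / (K - c))\<^sup>2) * (c * 2 * (K - c) - s * (s * 2)) / ((K - c) * (K - c))
      = 2 * (K * c - 1) / (K\<^sup>2 + 1 - 2 * K * c)"
    if sc: "s\<^sup>2 + c\<^sup>2 = 1" and Kc: "K - c > 0" for s c K :: real
  proof -
    have "1 + (s / (K - c))\<^sup>2 = ((K - c)\<^sup>2 + s\<^sup>2) / (K - c)\<^sup>2"
      using Kc by (simp add: field_simps)
    moreover have "inverse (P / Q) * Y / Q = Y / P" if "Q \<noteq> 0" for P Q Y :: real
      using that by (simp add: field_simps)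
    moreover have "c * 2 * (K - c) - s * (s * 2) = 2 * (K * c - 1)"
      "(K - c)\<^sup>2 + s\<^sup>2 = K\<^sup>2 + 1 - 2 * K * c"
      using sc by (simp_all add: power2_eq_square algebra_simps)
    ultimately show ?thesis
      using Kc by (simp add: power2_eq_square)
  qed
  have "real k - cos (2 * x) > 0"
    using assms cos_le_one[of "2 * x"] by linarith
  then show ?thesis
    using quotient_rule_simp[of "sin (2 * x)" "cos (2 * x)" "real k"]
    unfolding theta_den_def by (auto intro!: derivative_eq_intros)
qed

lemma theta_integrand_0_eq: "theta_integrand k 0 x = (real k + 1) * (sin x)\<^sup>2 / theta_den k x"
  unfolding theta_integrand_def theta_num_def by (simp add: algebra_simps power2_eq_square)

lemma theta_integrand_0_antiderivative:
  assumes k: "k > 1"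
  shows "((\<lambda>x. (real k + 1) / (4 * real k) * x
      - (real k - 1) / (4 * real k) * (x + arctan (sin (2 * x) / (real k - cos (2 * x)))))
      has_real_derivative theta_integrand k 0 x) (at x within S)"
proof -
  define K c D where "K = real k" and "c = cos (2 * x)" and "D = theta_den k x"
  have "(real k - 1)\<^sup>2 > 0" using k by simp
  then have "D > 0" "K > 0" unfolding D_def K_def theta_den_eq using k by (simp_all add: add_pos_nonneg)
  have "(K + 1) / (4 * K) * 1 - (K - 1) / (4 * K) * (1 + 2 * (K * c - 1) / D)
      = ((K + 1) * D - (K - 1) * (D + 2 * (K * c - 1))) / (4 * K * D)"
    using \<open>D > 0\<close> \<open>K > 0\<close> by (simp add: field_simps)
  also have "(K + 1) * D - (K - 1) * (D + 2 * (K * c - 1)) = 2 * K * (K + 1) * (1 - c)"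
    unfolding D_def K_def c_def theta_den_def by (simp add: algebra_simps power2_eq_square)
  also have "\<dots> / (4 * K * D) = (K + 1) * ((1 - c) / 2) / D"
    using \<open>D > 0\<close> \<open>K > 0\<close> by (simp add: field_simps)
  also have "\<dots> = theta_integrand k 0 x"
    unfolding theta_integrand_0_eq K_def c_def D_def by (simp add: cos_double_sin)
  finally have "(real k + 1) / (4 * real k) * 1 - (real k - 1) / (4 * real k) *
      (1 + 2 * (real k * cos (2 * x) - 1) / theta_den k x) = theta_integrand k 0 x"
    unfolding K_def c_def D_def .
  moreover have "((\<lambda>x. (real k + 1) / (4 * real k) * x
      - (real k - 1) / (4 * real k) * (x + arctan (sin (2 * x) / (real k - cos (2 * x)))))
      has_real_derivative (real k + 1) / (4 * real k) * 1 - (real k - 1) / (4 * real k) *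
      (1 + 2 * (real k * cos (2 * x) - 1) / theta_den k x)) (at x within S)"
    by (intro DERIV_diff DERIV_cmult DERIV_add DERIV_ident arctan_theta_has_real_derivative k)
  ultimately show ?thesis by simp
qed

lemma has_integral_theta_integrand_0:
  assumes k: "k \<ge> 1"
  shows "(theta_integrand k 0 has_integral pi / (2 * real k)) {0..pi}"
proof (cases "k = 1")
  case True
  \<comment> \<open>the arctan antiderivative breaks down here, but the integrand is \<open>1/2\<close> off \<open>{0, \<pi>}\<close>\<close>
  have "((\<lambda>x. 1 / 2) has_integral pi / (2 * real k)) {0..pi}"
    using has_integral_const_real[of "1 / 2 :: real" 0 pi] True by simp
  then show ?thesis
  proof (rule has_integral_spike_finite[rotated 2])
    fix x assume "x \<in> {0..pi} - {0, pi}"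
    then have "sin x > 0" by (intro sin_gt_zero) auto
    then show "theta_integrand k 0 x = 1 / 2"
      unfolding theta_integrand_0_eq theta_den_eq using True by (simp add: field_simps power2_eq_square)
  qed simp
next
  case False
  then have k1: "k > 1" using k by simp
  define G where "G x = (real k + 1) / (4 * real k) * x
      - (real k - 1) / (4 * real k) * (x + arctan (sin (2 * x) / (real k - cos (2 * x))))" for x
  have "(theta_integrand k 0 has_integral (G pi - G 0)) {0..pi}"
    using theta_integrand_0_antiderivative[OF k1] unfolding G_def
    by (intro fundamental_theorem_of_calculus) (auto simp: has_real_derivative_iff_has_vector_derivative)
  moreover have "G pi - G 0 = pi / (2 * real k)"
    unfolding G_def using k1 by (simp add: field_simps)
  ultimately show ?thesis by simp
qed

lemma integral_theta_integrand:
  assumes k: "k \<ge> 1" and int: "theta_integrand k n integrable_on {0..pi}"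
  shows "integral {0..pi} (theta_integrand k n) = (if n = 0 then pi / (2 * real k) else 0)"
proof (cases "even n")
  case True
  have "(theta_integrand k (2 * m) has_integral (if m = 0 then pi / (2 * real k) else 0)) {0..pi}" for m
  proof (induction m)
    case 0
    then show ?case using has_integral_theta_integrand_0[OF k] by simp
  next
    case (Suc m)
    have "((\<lambda>x. real k * theta_integrand k (2 * m) x - sin x * sin ((real (2 * m) + 1) * x)) has_integral
        (real k * (if m = 0 then pi / (2 * real k) else 0) - (if 2 * m = 0 then pi / 2 else 0))) {0..pi}"
      by (intro has_integral_diff has_integral_mult_right Suc.IH has_integral_sin_mult_sin)
    moreover have "real k * (if m = 0 then pi / (2 * real k) else 0) - (if 2 * m = 0 then pi / 2 else 0) = 0"
      using k by auto
    ultimately show ?case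
      using theta_integrand_diff_Suc_Suc[OF k, of "2 * m"] by (simp add: algebra_simps)
  qed
  moreover obtain m where "n = 2 * m" using True by blast
  ultimately show ?thesis by (simp add: integral_unique)
next
  case False
  have "((\<lambda>x. theta_integrand k n (0 + pi - x)) has_integral integral {0..pi} (theta_integrand k n)) {0..pi}"
    using int by (intro has_integral_reflect_interval) (simp add: has_integral_integral)
  then have "((\<lambda>x. - theta_integrand k n x) has_integral integral {0..pi} (theta_integrand k n)) {0..pi}"
    using False by (simp add: theta_integrand_reflect)
  then have "integral {0..pi} (theta_integrand k n) = - integral {0..pi} (theta_integrand k n)"
    using int by (metis has_integral_integral has_integral_neg has_integral_unique)
  then show ?thesis using False by auto
qed

definition Pi_weight :: "nat \<Rightarrow> real \<Rightarrow> real" where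
  "Pi_weight k t = (real k + 1) / (2 * pi) * sqrt (4 * real k / (real k + 1)\<^sup>2 - t\<^sup>2) / (1 - t\<^sup>2)"

lemma Pi_density_eq: "Pi_density k t = Pi_weight k t * indicator {- Pi_edge k..Pi_edge k} t"
  unfolding Pi_density_def Pi_weight_def Pi_edge_def by simp

lemma Pi_edge_nonneg: "Pi_edge k \<ge> 0"
  unfolding Pi_edge_def by simp

lemma Pi_edge_le_1: "Pi_edge k \<le> 1"
proof -
  have "0 \<le> (sqrt (real k) - 1)\<^sup>2" by simp
  then have "2 * sqrt (real k) \<le> real k + 1" by (simp add: power2_eq_square algebra_simps)
  then show ?thesis unfolding Pi_edge_def by simp
qed

lemma Pi_edge_squared: "(Pi_edge k)\<^sup>2 = 4 * real k / (real k + 1)\<^sup>2"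
  unfolding Pi_edge_def by (simp add: power_divide power_mult_distrib)

lemma Pi_weight_nonneg:
  assumes "\<bar>t\<bar> \<le> Pi_edge k"
  shows "Pi_weight k t \<ge> 0"
proof -
  have "t\<^sup>2 \<le> (Pi_edge k)\<^sup>2" using power_mono[OF assms abs_ge_zero, of 2] by simp
  moreover have "t\<^sup>2 \<le> 1" using assms Pi_edge_le_1[of k] by (simp add: abs_square_le_1)
  ultimately show ?thesis unfolding Pi_weight_def Pi_edge_squared
    by (intro divide_nonneg_nonneg mult_nonneg_nonneg) auto
qed

lemma Pi_density_nonneg: "Pi_density k t \<ge> 0"
  unfolding Pi_density_eq using Pi_weight_nonneg by (auto simp: indicator_def)

lemma borel_measurable_cd_real [measurable]: "cd_real k n \<in> borel_measurable borel"
  by (intro borel_measurable_continuous_onI continuous_on_cd_real)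

lemma borel_measurable_Pi_weight [measurable]: "Pi_weight k \<in> borel_measurable borel"
  unfolding Pi_weight_def by measurable

lemma borel_measurable_Pi_density [measurable]: "Pi_density k \<in> borel_measurable borel"
  unfolding Pi_density_eq[abs_def] by measurable

lemma Pi_weight_cos_subst:
  assumes "x \<in> {0..pi}"
  shows "Pi_weight k (- Pi_edge k * cos x) * (Pi_edge k * sin x)
    = (real k + 1) / (2 * pi) * (4 * real k * (sin x)\<^sup>2 / theta_den k x)"
proof -
  have "sin x \<ge> 0" using assms by (auto intro: sin_ge_zero)
  have "4 * real k / (real k + 1)\<^sup>2 - (- Pi_edge k * cos x)\<^sup>2 = (Pi_edge k * sin x)\<^sup>2"
    unfolding Pi_edge_squared[symmetric] power_mult_distrib sin_squared_eq
    by (simp add: algebra_simps)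
  moreover have "sqrt ((Pi_edge k * sin x)\<^sup>2) = Pi_edge k * sin x"
    using \<open>sin x \<ge> 0\<close> Pi_edge_nonneg[of k] by simp
  moreover have "1 - (- Pi_edge k * cos x)\<^sup>2 = theta_den k x / (real k + 1)\<^sup>2"
  proof -
    have edge: "(- Pi_edge k * cos x)\<^sup>2 = 4 * real k / (real k + 1)\<^sup>2 * (cos x)\<^sup>2"
      by (simp add: power_mult_distrib Pi_edge_squared)
    have den: "theta_den k x = (real k + 1)\<^sup>2 - 4 * real k * (cos x)\<^sup>2"
      unfolding theta_den_def cos_double_cos by (simp add: power2_eq_square algebra_simps)
    show ?thesis unfolding edge den by (simp add: field_simps)
  qed
  ultimately have "Pi_weight k (- Pi_edge k * cos x) * (Pi_edge k * sin x)
      = (real k + 1) / (2 * pi) * ((Pi_edge k)\<^sup>2 * (sin x)\<^sup>2 / (theta_den k x / (real k + 1)\<^sup>2))"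
    unfolding Pi_weight_def by (simp add: power_mult_distrib power2_eq_square)
  also have "\<dots> = (real k + 1) / (2 * pi) * (4 * real k * (sin x)\<^sup>2 / theta_den k x)"
    unfolding Pi_edge_squared by (simp add: field_simps)
  finally show ?thesis .
qed

lemma Pi_weight_cos_subst_le:
  assumes "x \<in> {0..pi}"
  shows "Pi_weight k (- Pi_edge k * cos x) * (Pi_edge k * sin x) \<le> (real k + 1) / (2 * pi)"
proof -
  have "4 * real k * (sin x)\<^sup>2 \<le> theta_den k x" unfolding theta_den_eq by simp
  then have "4 * real k * (sin x)\<^sup>2 / theta_den k x \<le> 1"
    using theta_den_nonneg[of k x] by (cases "theta_den k x = 0") (auto simp: divide_le_eq_1)
  then have "(real k + 1) / (2 * pi) * (4 * real k * (sin x)\<^sup>2 / theta_den k x) \<le> (real k + 1) / (2 * pi) * 1"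
    by (intro mult_left_mono) simp_all
  then show ?thesis
    unfolding Pi_weight_cos_subst[OF assms] by simp
qed

lemma Pi_weight_cd_real_cos_subst:
  assumes "k \<ge> 1" and "x \<in> {0..pi}"
  shows "Pi_weight k (- Pi_edge k * cos x) * cd_real k n (- Pi_edge k * cos x) * (Pi_edge k * sin x)
    = (-1) ^ n * (2 * real k / (pi * sqrt (real k) ^ n)) * theta_integrand k n x"
proof -
  have "real k > 0" using assms(1) by simp
  have "Pi_weight k (- Pi_edge k * cos x) * cd_real k n (- Pi_edge k * cos x) * (Pi_edge k * sin x)
      = (Pi_weight k (- Pi_edge k * cos x) * (Pi_edge k * sin x)) * cd_real k n (- Pi_edge k * cos x)"
    by (simp add: algebra_simps)
  also have "\<dots> = (real k + 1) / (2 * pi) * (4 * real k * (sin x)\<^sup>2 / theta_den k x)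
      * ((-1) ^ n * cd_real k n (Pi_edge k * cos x))"
    unfolding Pi_weight_cos_subst[OF assms(2)] using cd_real_uminus[of k n "Pi_edge k * cos x"] by simp
  also have "\<dots> = (-1) ^ n * (2 * real k / pi) / theta_den k x * sin x
      * ((real k + 1) * sin x * cd_real k n (Pi_edge k * cos x))"
    by (cases "theta_den k x = 0") (simp_all add: field_simps power2_eq_square)
  also have "(real k + 1) * sin x * cd_real k n (Pi_edge k * cos x) = theta_num k n x / sqrt (real k) ^ n"
    using cd_real_Pi_edge_cos[OF assms(1), of n x] \<open>real k > 0\<close> by (simp add: field_simps)
  finally show ?thesis
    unfolding theta_integrand_def by (simp add: field_simps)
qed

lemma cos_subst_has_real_derivative:
  "((\<lambda>x. - Pi_edge k * cos x) has_real_derivative Pi_edge k * sin x) (at x)"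
  by (auto intro!: derivative_eq_intros)

lemma integrable_Pi_density:
  assumes "k \<ge> 1"
  shows "integrable lborel (Pi_density k)"
proof (rule integrableI_bounded)
  let ?g = "\<lambda>x. - Pi_edge k * cos x"
  have "(\<integral>\<^sup>+ t. ennreal (norm (Pi_density k t)) \<partial>lborel)
      = (\<integral>\<^sup>+ t. ennreal (Pi_weight k t * indicator {?g 0..?g pi} t) \<partial>lborel)"
    by (intro nn_integral_cong) (auto simp: Pi_density_eq Pi_density_nonneg[of k, unfolded Pi_density_eq])
  also have "\<dots> = (\<integral>\<^sup>+ x. ennreal (Pi_weight k (?g x) * (Pi_edge k * sin x) * indicator {0..pi} x) \<partial>lborel)"
  proof (rule nn_integral_substitution)
    show "set_borel_measurable borel {?g 0..?g pi} (Pi_weight k)"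
      unfolding set_borel_measurable_def by measurable
    show "(?g has_real_derivative Pi_edge k * sin x) (at x)" for x
      by (rule cos_subst_has_real_derivative)
  qed (auto intro!: continuous_intros mult_nonneg_nonneg sin_ge_zero Pi_edge_nonneg)
  also have "\<dots> \<le> (\<integral>\<^sup>+ x. ennreal ((real k + 1) / (2 * pi)) * indicator {0..pi} x \<partial>lborel)"
    using Pi_weight_cos_subst_le[of _ k]
    by (intro nn_integral_mono) (auto simp: indicator_def intro!: ennreal_leI)
  also have "\<dots> = ennreal ((real k + 1) / (2 * pi)) * emeasure lborel {0..pi}"
    by (rule nn_integral_cmult_indicator) simp
  also have "\<dots> < \<infinity>"
    by (simp add: ennreal_mult_less_top)
  finally show "(\<integral>\<^sup>+ t. ennreal (norm (Pi_density k t)) \<partial>lborel) < \<infinity>" .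
qed measurable

lemma integrable_Pi_measure:
  fixes f :: "real \<Rightarrow> 'a::{banach, second_countable_topology}"
  assumes "k \<ge> 1" and f: "continuous_on UNIV f"
  shows "integrable (Pi_measure k) f"
proof -
  have "bounded (f ` {-1..1})"
    using f by (intro compact_imp_bounded compact_continuous_image) (auto intro: continuous_on_subset)
  then obtain M where "\<forall>y \<in> f ` {-1..1}. norm y \<le> M"
    unfolding bounded_iff by blast
  then have M: "\<And>t. t \<in> {-1..1} \<Longrightarrow> norm (f t) \<le> M" by simp
  have [measurable]: "f \<in> borel_measurable borel"
    using f by (rule borel_measurable_continuous_onI)
  have bound: "norm (Pi_density k t *\<^sub>R f t) \<le> Pi_density k t * M" for t
  proof (cases "t \<in> {- Pi_edge k..Pi_edge k}")
    case True
    then have "t \<in> {-1..1}" using Pi_edge_le_1[of k] by auto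
    then show ?thesis using M Pi_density_nonneg[of k t] by (simp add: mult_left_mono)
  qed (simp add: Pi_density_eq)
  have "norm (Pi_density k t *\<^sub>R f t) \<le> norm (Pi_density k t * M)" for t
    using bound[of t] abs_ge_self[of "Pi_density k t * M"] unfolding real_norm_def by linarith
  then have "AE t in lborel. norm (Pi_density k t *\<^sub>R f t) \<le> norm (Pi_density k t * M)"
    by simp
  moreover have "integrable lborel (\<lambda>t. Pi_density k t * M)"
    using integrable_Pi_density[OF assms(1)] by simp
  moreover have "(\<lambda>t. Pi_density k t *\<^sub>R f t) \<in> borel_measurable lborel"
    by measurable
  ultimately have "integrable lborel (\<lambda>t. Pi_density k t *\<^sub>R f t)"
    by (rule Bochner_Integration.integrable_bound[rotated 2])
  then show ?thesis
    unfolding Pi_measure_def by (subst integrable_density) (auto simp: Pi_density_nonneg)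
qed

lemma integral_substitution_cos:
  assumes "set_integrable lborel {- Pi_edge k..Pi_edge k} f"
  shows "set_integrable lborel {0..pi} (\<lambda>x. f (- Pi_edge k * cos x) * (Pi_edge k * sin x))"
    and "(LBINT t. f t * indicator {- Pi_edge k..Pi_edge k} t)
      = (LBINT x. f (- Pi_edge k * cos x) * (Pi_edge k * sin x) * indicator {0..pi} x)"
proof -
  have cont: "continuous_on {0..pi} (\<lambda>x. Pi_edge k * sin x)" by (intro continuous_intros)
  have nonneg: "x \<in> {0..pi} \<Longrightarrow> 0 \<le> Pi_edge k * sin x" for x
    by (auto intro!: mult_nonneg_nonneg sin_ge_zero Pi_edge_nonneg)
  note subst = integral_substitution[of "\<lambda>x. - Pi_edge k * cos x" 0 pi f, OF _ cos_subst_has_real_derivative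
      cont nonneg pi_ge_zero]
  from assms show "set_integrable lborel {0..pi} (\<lambda>x. f (- Pi_edge k * cos x) * (Pi_edge k * sin x))"
    by (intro subst(1)) simp
  from assms show "(LBINT t. f t * indicator {- Pi_edge k..Pi_edge k} t)
      = (LBINT x. f (- Pi_edge k * cos x) * (Pi_edge k * sin x) * indicator {0..pi} x)"
    using subst(2) by simp
qed

lemma set_integrable_Pi_weight_cd_real:
  assumes "k \<ge> 1"
  shows "set_integrable lborel {- Pi_edge k..Pi_edge k} (\<lambda>t. Pi_weight k t * cd_real k n t)"
proof -
  have "integrable lborel (\<lambda>t. Pi_density k t * cd_real k n t)"
    using integrable_Pi_measure[OF assms continuous_on_cd_real] unfolding Pi_measure_def
    by (subst (asm) integrable_density) (auto simp: Pi_density_nonneg)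
  then show ?thesis
    unfolding set_integrable_def by (simp add: Pi_density_eq mult_ac)
qed

lemma set_integrable_theta_integrand:
  assumes k: "k \<ge> 1"
  shows "set_integrable lborel {0..pi} (theta_integrand k n)"
proof -
  define c where "c = (-1) ^ n * (2 * real k / (pi * sqrt (real k) ^ n))"
  have "c \<noteq> 0" using k unfolding c_def by simp
  have "set_integrable lborel {0..pi} (\<lambda>x. (1 / c) *
      (Pi_weight k (- Pi_edge k * cos x) * cd_real k n (- Pi_edge k * cos x) * (Pi_edge k * sin x)))"
    using integral_substitution_cos(1)[OF set_integrable_Pi_weight_cd_real[OF k]]
    by (rule set_integrable_mult_right)
  then show ?thesis
    unfolding set_integrable_def
  proof (rule Bochner_Integration.integrable_cong[OF refl, THEN iffD1, rotated])
    show "indicator {0..pi} x *\<^sub>R ((1 / c) *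
        (Pi_weight k (- Pi_edge k * cos x) * cd_real k n (- Pi_edge k * cos x) * (Pi_edge k * sin x)))
        = indicator {0..pi} x *\<^sub>R theta_integrand k n x" for x
      using Pi_weight_cd_real_cos_subst[OF k, of x n] \<open>c \<noteq> 0\<close> unfolding c_def
      by (cases "x \<in> {0..pi}") simp_all
  qed
qed

lemma integral_cd_real:
  assumes k: "k \<ge> 1"
  shows "(LINT t|Pi_measure k. cd_real k n t) = (if n = 0 then 1 else 0)"
proof -
  define c where "c = (-1) ^ n * (2 * real k / (pi * sqrt (real k) ^ n))"
  note theta_int = set_integrable_theta_integrand[OF k, of n]
  have "(LINT t|Pi_measure k. cd_real k n t) = (LINT t|lborel. Pi_density k t * cd_real k n t)"
    unfolding Pi_measure_def by (subst integral_density) (auto simp: Pi_density_nonneg)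
  also have "\<dots> = (LINT t|lborel. Pi_weight k t * cd_real k n t * indicator {- Pi_edge k..Pi_edge k} t)"
    by (intro Bochner_Integration.integral_cong) (auto simp: Pi_density_eq)
  also have "\<dots> = (LINT x|lborel. Pi_weight k (- Pi_edge k * cos x) * cd_real k n (- Pi_edge k * cos x)
      * (Pi_edge k * sin x) * indicator {0..pi} x)"
    by (rule integral_substitution_cos(2)[OF set_integrable_Pi_weight_cd_real[OF k]])
  also have "\<dots> = (LINT x|lborel. c * (indicator {0..pi} x *\<^sub>R theta_integrand k n x))"
  proof (rule Bochner_Integration.integral_cong[OF refl])
    show "Pi_weight k (- Pi_edge k * cos x) * cd_real k n (- Pi_edge k * cos x) * (Pi_edge k * sin x)
        * indicator {0..pi} x = c * (indicator {0..pi} x *\<^sub>R theta_integrand k n x)" for x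
      using Pi_weight_cd_real_cos_subst[OF k, of x n] unfolding c_def
      by (cases "x \<in> {0..pi}") simp_all
  qed
  also have "\<dots> = c * integral {0..pi} (theta_integrand k n)"
    using set_borel_integral_eq_integral(2)[OF theta_int] by (simp add: set_lebesgue_integral_def)
  also have "\<dots> = (if n = 0 then 1 else 0)"
    using integral_theta_integrand[OF k set_borel_integral_eq_integral(1)[OF theta_int]] k
    unfolding c_def by simp
  finally show ?thesis .
qed

section \<open>The kernels \<open>T[\<phi>]\<close>\<close>

lemma cd_hat_eq:
  "cd_hat k \<phi> n = (LINT t|Pi_measure k. complex_of_real (cd_real k n t) * poly \<phi> (complex_of_real t))"
  unfolding cd_hat_def poly_cartier_dunau_of_real ..

lemma integrable_cd_real_mult_poly:
  assumes "k \<ge> 1"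
  shows "integrable (Pi_measure k) (\<lambda>t. complex_of_real (cd_real k n t) * poly \<phi> (complex_of_real t))"
  using assms continuous_on_cd_real
  by (intro integrable_Pi_measure) (auto intro!: continuous_intros)

lemma cd_hat_add: "k \<ge> 1 \<Longrightarrow> cd_hat k (p + q) n = cd_hat k p n + cd_hat k q n"
  unfolding cd_hat_eq by (simp add: distrib_left integrable_cd_real_mult_poly)

lemma cd_hat_smult: "cd_hat k (smult a p) n = a * cd_hat k p n"
  unfolding cd_hat_eq by (simp add: mult.left_commute)

lemma cd_hat_1: "k \<ge> 1 \<Longrightarrow> cd_hat k 1 n = (if n = 0 then 1 else 0)"
  unfolding cd_hat_eq using integral_cd_real[of k n] by simp

lemma cd_hat_pCons_0_0: "cd_hat k (pCons 0 \<phi>) 0 = cd_hat k \<phi> 1"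
  unfolding cd_hat_eq by (simp add: mult.commute)

lemma cd_hat_pCons_0_Suc:
  assumes k: "k \<ge> 1"
  shows "cd_hat k (pCons 0 \<phi>) (Suc n) =
    of_nat k / (of_nat k + 1) * cd_hat k \<phi> (Suc (Suc n)) + 1 / (of_nat k + 1) * cd_hat k \<phi> n"
proof -
  let ?F = "\<lambda>m t. complex_of_real (cd_real k m t) * poly \<phi> (complex_of_real t)"
  have "complex_of_real (cd_real k (Suc n) t) * poly (pCons 0 \<phi>) (complex_of_real t)
      = complex_of_real (t * cd_real k (Suc n) t) * poly \<phi> (complex_of_real t)" for t
    by (simp add: mult_ac)
  also have "\<dots> t = of_nat k / (of_nat k + 1) * ?F (Suc (Suc n)) t + 1 / (of_nat k + 1) * ?F n t" for t
    unfolding cd_real_three_term[OF k] by (simp add: algebra_simps del: cd_real.simps)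
  finally have "cd_hat k (pCons 0 \<phi>) (Suc n)
      = (LINT t|Pi_measure k. of_nat k / (of_nat k + 1) * ?F (Suc (Suc n)) t + 1 / (of_nat k + 1) * ?F n t)"
    unfolding cd_hat_eq by simp
  also have "\<dots> = (LINT t|Pi_measure k. of_nat k / (of_nat k + 1) * ?F (Suc (Suc n)) t)
      + (LINT t|Pi_measure k. 1 / (of_nat k + 1) * ?F n t)"
    by (intro Bochner_Integration.integral_add integrable_mult_right integrable_cd_real_mult_poly[OF k])
  finally show ?thesis
    unfolding cd_hat_eq by (simp del: cd_real.simps)
qed

lemma T_kernel_eq_cd_hat_word_dist:
  "x \<in> cayley_V k \<Longrightarrow> y \<in> cayley_V k \<Longrightarrow> T_kernel k \<phi> x y = cd_hat k \<phi> (word_dist x y)"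
  unfolding T_kernel_def by (simp add: cayley_dist_eq_word_dist)

lemma T_kernel_add: "k \<ge> 1 \<Longrightarrow> T_kernel k (p + q) x y = T_kernel k p x y + T_kernel k q x y"
  unfolding T_kernel_def by (simp add: cd_hat_add)

lemma T_kernel_smult: "T_kernel k (smult a p) x y = a * T_kernel k p x y"
  unfolding T_kernel_def by (simp add: cd_hat_smult)

lemma T_kernel_pCons_0:
  assumes k: "k \<ge> 1" and x: "x \<in> cayley_V k" and y: "y \<in> cayley_V k"
  shows "T_kernel k (pCons 0 \<phi>) x y = 1 / (of_nat k + 1) * (\<Sum>w\<in>cayley_nbrs k x. T_kernel k \<phi> w y)"
proof -
  have "w \<in> cayley_V k" if "w \<in> cayley_nbrs k x" for w
    using that unfolding cayley_nbrs_def cayley_adj_def by simp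
  then have "(\<Sum>w\<in>cayley_nbrs k x. T_kernel k \<phi> w y) = (\<Sum>w\<in>cayley_nbrs k x. cd_hat k \<phi> (word_dist w y))"
    using y by (intro sum.cong) (simp_all add: T_kernel_eq_cd_hat_word_dist)
  also have "\<dots> = (if x = y then of_nat (k + 1) * cd_hat k \<phi> 1
      else cd_hat k \<phi> (word_dist x y - 1) + of_nat k * cd_hat k \<phi> (word_dist x y + 1))"
    by (rule sum_cayley_nbrs_word_dist[OF x y])
  finally have sum: "(\<Sum>w\<in>cayley_nbrs k x. T_kernel k \<phi> w y) = \<dots>" .
  have "(of_nat k + 1 :: complex) \<noteq> 0"
    by (metis of_nat_Suc of_nat_eq_0_iff add.commute nat.distinct(1))
  show ?thesis
  proof (cases "x = y")
    case True
    then show ?thesis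
      using \<open>of_nat k + 1 \<noteq> 0\<close> sum T_kernel_eq_cd_hat_word_dist[OF x y]
      by (simp add: cd_hat_pCons_0_0 field_simps)
  next
    case False
    then obtain m where m: "word_dist x y = Suc m"
      using word_dist_eq_0_iff not0_implies_Suc by blast
    have "c / d * A + 1 / d * B = 1 / d * (B + c * A)" for c d A B :: complex
      by (simp add: distrib_left add.commute)
    then show ?thesis
      using False m sum T_kernel_eq_cd_hat_word_dist[OF x y] by (simp add: cd_hat_pCons_0_Suc[OF k])
  qed
qed

lemma T_kernel_pCons:
  assumes k: "k \<ge> 1" and x: "x \<in> cayley_V k" and y: "y \<in> cayley_V k"
  shows "T_kernel k (pCons a \<phi>) x y =
    a * (if x = y then 1 else 0) + 1 / (of_nat k + 1) * (\<Sum>w\<in>cayley_nbrs k x. T_kernel k \<phi> w y)"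
proof -
  have "pCons a \<phi> = smult a 1 + pCons 0 \<phi>" by simp
  then have "T_kernel k (pCons a \<phi>) x y = a * T_kernel k 1 x y + T_kernel k (pCons 0 \<phi>) x y"
    by (simp only: T_kernel_add[OF k] T_kernel_smult)
  then show ?thesis
    unfolding T_kernel_pCons_0[OF k x y]
    by (simp add: T_kernel_eq_cd_hat_word_dist[OF x y] cd_hat_1[OF k] word_dist_eq_0_iff)
qed

lemma has_sum_sum:
  fixes f :: "'i \<Rightarrow> 'a \<Rightarrow> 'b::topological_comm_monoid_add"
  assumes "finite I" and "\<And>i. i \<in> I \<Longrightarrow> (f i has_sum s i) A"
  shows "((\<lambda>x. \<Sum>i\<in>I. f i x) has_sum (\<Sum>i\<in>I. s i)) A"
  using assms by (induction I rule: finite_induct) (auto intro: has_sum_add)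

lemma T_kernel_mult_has_sum:
  assumes k: "k \<ge> 1" and x: "x \<in> cayley_V k" and y: "y \<in> cayley_V k"
  shows "((\<lambda>z. T_kernel k \<phi>1 x z * T_kernel k \<phi>2 z y) has_sum T_kernel k (\<phi>1 * \<phi>2) x y) (cayley_V k)"
  using x
proof (induction \<phi>1 arbitrary: x rule: pCons_induct)
  case 0
  then show ?case by (simp add: T_kernel_def cd_hat_def)
next
  case (pCons a p)
  let ?c = "1 / (of_nat k + 1) :: complex"
  have nbrs: "finite (cayley_nbrs k x)" "\<And>w. w \<in> cayley_nbrs k x \<Longrightarrow> w \<in> cayley_V k"
    using card_cayley_nbrs(1)[OF pCons.prems] unfolding cayley_nbrs_def cayley_adj_def by auto
  note T_pCons = T_kernel_pCons[OF k pCons.prems]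
  have diagonal: "((\<lambda>z. a * ((if x = z then 1 else 0) * T_kernel k \<phi>2 z y)) has_sum a * T_kernel k \<phi>2 x y) (cayley_V k)"
    by (rule has_sum_finite_neutralI[of "{x}"]) (use pCons.prems in auto)
  have neighbours: "((\<lambda>z. \<Sum>w\<in>cayley_nbrs k x. T_kernel k p w z * T_kernel k \<phi>2 z y)
      has_sum (\<Sum>w\<in>cayley_nbrs k x. T_kernel k (p * \<phi>2) w y)) (cayley_V k)"
    using nbrs pCons.IH by (intro has_sum_sum) auto
  have "((\<lambda>z. a * ((if x = z then 1 else 0) * T_kernel k \<phi>2 z y)
      + ?c * (\<Sum>w\<in>cayley_nbrs k x. T_kernel k p w z * T_kernel k \<phi>2 z y))
      has_sum (a * T_kernel k \<phi>2 x y + ?c * (\<Sum>w\<in>cayley_nbrs k x. T_kernel k (p * \<phi>2) w y))) (cayley_V k)"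
    by (rule has_sum_add[OF diagonal has_sum_cmult_right[OF neighbours]])
  also have "a * T_kernel k \<phi>2 x y + ?c * (\<Sum>w\<in>cayley_nbrs k x. T_kernel k (p * \<phi>2) w y)
      = T_kernel k (pCons a p * \<phi>2) x y"
    using T_pCons[OF y, of 0 "p * \<phi>2"]
    by (simp add: mult_pCons_left T_kernel_add[OF k] T_kernel_smult)
  finally show ?case
    by (rule has_sum_cong[THEN iffD1, rotated])
      (simp add: T_pCons distrib_right sum_distrib_right mult.assoc)
qed

theorem lemma4p1:
  fixes \<kappa> :: nat and \<phi>1 \<phi>2 :: "complex poly"
  assumes "\<kappa> \<ge> 1"
  shows "(\<forall>x\<in>cayley_V \<kappa>. \<forall>y\<in>cayley_V \<kappa>.
           ((\<lambda>z. T_kernel \<kappa> \<phi>1 x z * T_kernel \<kappa> \<phi>2 z y) has_sum T_kernel \<kappa> (\<phi>1 * \<phi>2) x y)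
             (cayley_V \<kappa>))
       \<and> (\<forall>v :: nat \<Rightarrow> nat list.
            (\<forall>k. v k \<in> cayley_V \<kappa>) \<and>
            (\<forall>k n. cayley_dist \<kappa> (v k) (v n) = (if k \<le> n then n - k else k - n)) \<longrightarrow>
            (\<forall>n. cd_hat \<kappa> (\<phi>1 * \<phi>2) n = tree_conv \<kappa> v (cd_hat \<kappa> \<phi>1) (cd_hat \<kappa> \<phi>2) n))"
proof (intro conjI ballI allI impI)
  fix x y assume "x \<in> cayley_V \<kappa>" "y \<in> cayley_V \<kappa>"
  then show "((\<lambda>z. T_kernel \<kappa> \<phi>1 x z * T_kernel \<kappa> \<phi>2 z y) has_sum T_kernel \<kappa> (\<phi>1 * \<phi>2) x y) (cayley_V \<kappa>)"
    by (rule T_kernel_mult_has_sum[OF assms])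
next
  fix v :: "nat \<Rightarrow> nat list" and n
  assume v: "(\<forall>k. v k \<in> cayley_V \<kappa>) \<and> (\<forall>k n. cayley_dist \<kappa> (v k) (v n) = (if k \<le> n then n - k else k - n))"
  then have "((\<lambda>z. T_kernel \<kappa> \<phi>1 (v 0) z * T_kernel \<kappa> \<phi>2 z (v n)) has_sum T_kernel \<kappa> (\<phi>1 * \<phi>2) (v 0) (v n))
      (cayley_V \<kappa>)"
    by (intro T_kernel_mult_has_sum[OF assms]) auto
  then have "tree_conv \<kappa> v (cd_hat \<kappa> \<phi>1) (cd_hat \<kappa> \<phi>2) n = T_kernel \<kappa> (\<phi>1 * \<phi>2) (v 0) (v n)"
    unfolding tree_conv_def T_kernel_def by (rule infsumI)
  also have "\<dots> = cd_hat \<kappa> (\<phi>1 * \<phi>2) n"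
    using v unfolding T_kernel_def by simp
  finally show "cd_hat \<kappa> (\<phi>1 * \<phi>2) n = tree_conv \<kappa> v (cd_hat \<kappa> \<phi>1) (cd_hat \<kappa> \<phi>2) n" ..
qed

end
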